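(* Let $\phi$ be a formula of $\mathsf{BSML}$ extended with both $\sqcup$ and $\oslash$. If $\phi$ does not contain $\mathrm{NE}$, then $\phi$ is downward closed and has the empty state property. If $\phi$ does not contain $\sqcup$, then $\phi$ is union closed. In particular, all formulas of $\mathsf{BSML}$ and of $\mathsf{BSML}^{\oslash}$ are union closed, and all formulas of $\mathsf{ML}$ are flat.
   Context: Formulas are generated by $\phi ::= p \mid \neg\phi \mid (\phi\wedge\phi) \mid (\phi\vee\phi) \mid \Diamond\phi \mid \mathrm{NE}\mid \phi\sqcup\phi\mid\oslash\phi$; $\mathsf{BSML}$ is the fragment without $\sqcup,\oslash$, $\mathsf{BSML}^{\oslash}$ the fragment without $\sqcup$, and $\mathsf{ML}$ the $\mathrm{NE}$-free fragment of $\mathsf{BSML}$. Models $M=(W,R,V)$ are Kripke models; a state is a subset $s\subseteq W$; $R[w]=\{v:wRv\}$. Support $\models$ and anti-support $\dashv$: $s\models p$ iff $s\subseteq V(p)$; $s\dashv p$ iff $s\cap V(p)=\emptyset$; $s\models\mathrm{NE}$ iff $s\neq\emptyset$; $s\dashv\mathrm{NE}$ iff $s=\emptyset$; $s\models\neg\phi$ iff $s\dashv\phi$; $s\dashv\neg\phi$ iff $s\models\phi$; $s\models\phi\wedge\psi$ iff both; $s\dashv\phi\wedge\psi$ iff $s=t\cup u$ with $t\dashv\phi,u\dashv\psi$; $s\models\phi\vee\psi$ iff $s=t\cup u$ with $t\models\phi,u\models\psi$; $s\dashv\phi\vee\psi$ iff $s\dashv\phi$ and $s\dashv\psi$; $s\models\phi\sqcup\psi$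 iff $s\models\phi$ or $s\models\psi$; $s\dashv\phi\sqcup\psi$ iff $s\dashv\phi$ and $s\dashv\psi$; $s\models\Diamond\phi$ iff every $w\in s$ has a nonempty $t\subseteq R[w]$ with $t\models\phi$; $s\dashv\Diamond\phi$ iff $R[w]\dashv\phi$ for all $w\in s$; $s\models\oslash\phi$ iff $s\models\phi$ or $s=\emptyset$; $s\dashv\oslash\phi$ iff $s\dashv\phi$. A formula $\phi$ is downward closed if $M,s\models\phi$ and $t\subseteq s$ imply $M,t\models\phi$; union closed if $M,s\models\phi$ for all $s$ in a nonempty set $S$ of states implies $M,\bigcup S\models\phi$; has the empty state property if $M,\emptyset\models\phi$ for every $M$; flat if $M,s\models\phi$ iff $M,\{w\}\models\phi$ for all $w\in s$. *)

theory Defs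
  imports Main
begin

datatype 'p form =
    Prop 'p
  | Neg "'p form"
  | Conj "'p form" "'p form"
  | Disj "'p form" "'p form"
  | Dia "'p form"
  | NE
  | GDisj "'p form" "'p form"   (* global / inquisitive disjunction \<sqcup> *)
  | Emp "'p form"               (* \<oslash> *)

(* Kripke model: worlds are the elements of type 'w (W = UNIV) *)
record ('w, 'p) kmodel =
  Rel :: "'w \<Rightarrow> 'w \<Rightarrow> bool"
  Val :: "'p \<Rightarrow> 'w set"

definition succ :: "('w, 'p) kmodel \<Rightarrow> 'w \<Rightarrow> 'w set" where
  "succ M w = {v. Rel M w v}"

(* sem M True  phi s  :  M, s supports phi
   sem M False phi s  :  M, s anti-supports phi *)
fun sem :: "('w, 'p) kmodel \<Rightarrow> bool \<Rightarrow> 'p form \<Rightarrow> 'w set \<Rightarrow> bool" where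
  "sem M True (Prop p) s = (s \<subseteq> Val M p)"
| "sem M False (Prop p) s = (s \<inter> Val M p = {})"
| "sem M True NE s = (s \<noteq> {})"
| "sem M False NE s = (s = {})"
| "sem M True (Neg \<phi>) s = sem M False \<phi> s"
| "sem M False (Neg \<phi>) s = sem M True \<phi> s"
| "sem M True (Conj \<phi> \<psi>) s = (sem M True \<phi> s \<and> sem M True \<psi> s)"
| "sem M False (Conj \<phi> \<psi>) s = (\<exists>t u. s = t \<union> u \<and> sem M False \<phi> t \<and> sem M False \<psi> u)"
| "sem M True (Disj \<phi> \<psi>) s = (\<exists>t u. s = t \<union> u \<and> sem M True \<phi> t \<and> sem M True \<psi> u)"
| "sem M False (Disj \<phi> \<psi>) s = (sem M False \<phi> s \<and> sem M False \<psi> s)"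
| "sem M True (GDisj \<phi> \<psi>) s = (sem M True \<phi> s \<or> sem M True \<psi> s)"
| "sem M False (GDisj \<phi> \<psi>) s = (sem M False \<phi> s \<and> sem M False \<psi> s)"
| "sem M True (Dia \<phi>) s = (\<forall>w\<in>s. \<exists>t. t \<noteq> {} \<and> t \<subseteq> succ M w \<and> sem M True \<phi> t)"
| "sem M False (Dia \<phi>) s = (\<forall>w\<in>s. sem M False \<phi> (succ M w))"
| "sem M True (Emp \<phi>) s = (sem M True \<phi> s \<or> s = {})"
| "sem M False (Emp \<phi>) s = sem M False \<phi> s"

abbreviation supports :: "('w, 'p) kmodel \<Rightarrow> 'w set \<Rightarrow> 'p form \<Rightarrow> bool" where
  "supports M s \<phi> \<equiv> sem M True \<phi> s"

fun has_NE :: "'p form \<Rightarrow> bool" where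
  "has_NE (Prop p) = False"
| "has_NE NE = True"
| "has_NE (Neg \<phi>) = has_NE \<phi>"
| "has_NE (Conj \<phi> \<psi>) = (has_NE \<phi> \<or> has_NE \<psi>)"
| "has_NE (Disj \<phi> \<psi>) = (has_NE \<phi> \<or> has_NE \<psi>)"
| "has_NE (GDisj \<phi> \<psi>) = (has_NE \<phi> \<or> has_NE \<psi>)"
| "has_NE (Dia \<phi>) = has_NE \<phi>"
| "has_NE (Emp \<phi>) = has_NE \<phi>"

fun has_GDisj :: "'p form \<Rightarrow> bool" where
  "has_GDisj (Prop p) = False"
| "has_GDisj NE = False"
| "has_GDisj (Neg \<phi>) = has_GDisj \<phi>"
| "has_GDisj (Conj \<phi> \<psi>) = (has_GDisj \<phi> \<or> has_GDisj \<psi>)"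
| "has_GDisj (Disj \<phi> \<psi>) = (has_GDisj \<phi> \<or> has_GDisj \<psi>)"
| "has_GDisj (GDisj \<phi> \<psi>) = True"
| "has_GDisj (Dia \<phi>) = has_GDisj \<phi>"
| "has_GDisj (Emp \<phi>) = has_GDisj \<phi>"

fun has_Emp :: "'p form \<Rightarrow> bool" where
  "has_Emp (Prop p) = False"
| "has_Emp NE = False"
| "has_Emp (Neg \<phi>) = has_Emp \<phi>"
| "has_Emp (Conj \<phi> \<psi>) = (has_Emp \<phi> \<or> has_Emp \<psi>)"
| "has_Emp (Disj \<phi> \<psi>) = (has_Emp \<phi> \<or> has_Emp \<psi>)"
| "has_Emp (GDisj \<phi> \<psi>) = (has_Emp \<phi> \<or> has_Emp \<psi>)"
| "has_Emp (Dia \<phi>) = has_Emp \<phi>"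
| "has_Emp (Emp \<phi>) = True"

definition is_BSML :: "'p form \<Rightarrow> bool" where
  "is_BSML \<phi> = (\<not> has_GDisj \<phi> \<and> \<not> has_Emp \<phi>)"

definition is_BSML_emp :: "'p form \<Rightarrow> bool" where
  "is_BSML_emp \<phi> = (\<not> has_GDisj \<phi>)"

definition is_ML :: "'p form \<Rightarrow> bool" where
  "is_ML \<phi> = (is_BSML \<phi> \<and> \<not> has_NE \<phi>)"

definition downward_closed :: "'p form \<Rightarrow> 'w itself \<Rightarrow> bool" where
  "downward_closed \<phi> _ = (\<forall>(M :: ('w, 'p) kmodel) s t.
      supports M s \<phi> \<and> t \<subseteq> s \<longrightarrow> supports M t \<phi>)"

definition union_closed :: "'p form \<Rightarrow> 'w itself \<Rightarrow> bool" where
  "union_closed \<phi> _ = (\<forall>(M :: ('w, 'p) kmodel) (S :: 'w set set).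
      S \<noteq> {} \<and> (\<forall>s\<in>S. supports M s \<phi>) \<longrightarrow> supports M (\<Union>S) \<phi>)"

definition empty_state_property :: "'p form \<Rightarrow> 'w itself \<Rightarrow> bool" where
  "empty_state_property \<phi> _ = (\<forall>M :: ('w, 'p) kmodel. supports M {} \<phi>)"

definition flat :: "'p form \<Rightarrow> 'w itself \<Rightarrow> bool" where
  "flat \<phi> _ = (\<forall>(M :: ('w, 'p) kmodel) s.
      supports M s \<phi> \<longleftrightarrow> (\<forall>w\<in>s. supports M {w} \<phi>))"

end

theory Submission
  imports Defs
begin

text \<open>
  All three closure properties are proved by induction on the formula, simultaneously for
  support and anti-support, since negation swaps the two. \<open>NE\<close> is the only atom that
  fails downward closure and the empty state property, and \<open>\<sqcup>\<close> is the only connective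
  whose support clause is a disjunction of conditions on the whole state, which is what
  breaks union closure; every other clause is local to subsets or to single worlds.
  A formula with all three properties is flat: a state is the union of its singletons,
  and the empty state is covered by the empty state property.
\<close>

lemma sem_empty_if_NE_free:
  assumes "\<not> has_NE \<phi>"
  shows "sem M b \<phi> {}"
  using assms by (induction \<phi> arbitrary: b) (case_tac b; force)+

lemma sem_antimono_if_NE_free:
  assumes "\<not> has_NE \<phi>" and "sem M b \<phi> s" and "t \<subseteq> s"
  shows "sem M b \<phi> t"
  using assms
proof (induction \<phi> arbitrary: b s t)
  case (Conj \<phi> \<psi>)
  show ?case
  proof (cases b)
    case False
    with Conj.prems obtain u v where "s = u \<union> v" "sem M False \<phi> u" "sem M False \<psi> v"
      by auto
    with Conj have "t = (t \<inter> u) \<union> (t \<inter> v)"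
      and "sem M False \<phi> (t \<inter> u)" and "sem M False \<psi> (t \<inter> v)"
      by auto
    with False show ?thesis by auto
  qed (use Conj in auto)
next
  case (Disj \<phi> \<psi>)
  show ?case
  proof (cases b)
    case True
    with Disj.prems obtain u v where "s = u \<union> v" "sem M True \<phi> u" "sem M True \<psi> v"
      by auto
    with Disj have "t = (t \<inter> u) \<union> (t \<inter> v)"
      and "sem M True \<phi> (t \<inter> u)" and "sem M True \<psi> (t \<inter> v)"
      by auto
    with True show ?thesis by auto
  qed (use Disj in auto)
qed (case_tac b; force)+

lemma sem_UNION_if_GDisj_free:
  assumes "\<not> has_GDisj \<phi>" and "I \<noteq> {}" and "\<forall>i\<in>I. sem M b \<phi> (f i)"
  shows "sem M b \<phi> (\<Union>i\<in>I. f i)"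
  using assms
proof (induction \<phi> arbitrary: b I f)
  case (Conj \<phi> \<psi>)
  show ?case
  proof (cases b)
    case False
    with Conj.prems obtain u v
      where uv: "\<forall>i\<in>I. f i = u i \<union> v i \<and> sem M False \<phi> (u i) \<and> sem M False \<psi> (v i)"
      by simp metis
    then have "(\<Union>i\<in>I. f i) = (\<Union>i\<in>I. u i) \<union> (\<Union>i\<in>I. v i)"
      by blast
    moreover have "sem M False \<phi> (\<Union>i\<in>I. u i)" "sem M False \<psi> (\<Union>i\<in>I. v i)"
      using Conj.IH(1)[of I False u] Conj.IH(2)[of I False v] Conj.prems uv by auto
    ultimately show ?thesis using False by auto
  qed (use Conj.IH(1)[of I True f] Conj.IH(2)[of I True f] Conj.prems in simp)
next
  case (Disj \<phi> \<psi>)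
  show ?case
  proof (cases b)
    case True
    with Disj.prems obtain u v
      where uv: "\<forall>i\<in>I. f i = u i \<union> v i \<and> sem M True \<phi> (u i) \<and> sem M True \<psi> (v i)"
      by simp metis
    then have "(\<Union>i\<in>I. f i) = (\<Union>i\<in>I. u i) \<union> (\<Union>i\<in>I. v i)"
      by blast
    moreover have "sem M True \<phi> (\<Union>i\<in>I. u i)" "sem M True \<psi> (\<Union>i\<in>I. v i)"
      using Disj.IH(1)[of I True u] Disj.IH(2)[of I True v] Disj.prems uv by auto
    ultimately show ?thesis using True by auto
  qed (use Disj.IH(1)[of I False f] Disj.IH(2)[of I False f] Disj.prems in simp)
next
  case (Emp \<phi>)
  show ?case
  proof (cases b)
    case True
    \<comment> \<open>Members supported only because they are empty do not contribute to the union.\<close>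
    define J where "J = {i \<in> I. sem M True \<phi> (f i)}"
    have union_J: "(\<Union>i\<in>I. f i) = (\<Union>i\<in>J. f i)"
      using Emp.prems(3) True by (auto simp: J_def)
    show ?thesis
    proof (cases "J = {}")
      case False
      moreover have "\<forall>i\<in>J. sem M True \<phi> (f i)"
        by (simp add: J_def)
      ultimately have "sem M True \<phi> (\<Union>i\<in>J. f i)"
        using Emp.IH[of J True f] Emp.prems(1) by simp
      with True union_J show ?thesis by simp
    qed (use True union_J in simp)
  qed (use Emp.IH[of I False f] Emp.prems in simp)
next
  case (Neg \<phi>)
  then show ?case by (cases b) auto
next
  case (Dia \<phi>)
  then show ?case by (cases b) auto
qed (case_tac b; auto)+

lemma empty_state_property_if_NE_free:
  "\<not> has_NE \<phi> \<Longrightarrow> empty_state_property \<phi> TYPE('w)"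
  unfolding empty_state_property_def by (simp add: sem_empty_if_NE_free)

lemma downward_closed_if_NE_free:
  "\<not> has_NE \<phi> \<Longrightarrow> downward_closed \<phi> TYPE('w)"
  unfolding downward_closed_def by (blast intro: sem_antimono_if_NE_free)

lemma union_closedD:
  fixes \<phi> :: "'p form" and M :: "('w, 'p) kmodel"
  assumes "union_closed \<phi> TYPE('w)" and "S \<noteq> {}" and "\<forall>s\<in>S. supports M s \<phi>"
  shows "supports M (\<Union>S) \<phi>"
  using assms unfolding union_closed_def by blast

lemma union_closed_if_GDisj_free:
  fixes \<phi> :: "'p form"
  assumes "\<not> has_GDisj \<phi>"
  shows "union_closed \<phi> TYPE('w)"
  unfolding union_closed_def
proof (intro allI impI)
  fix M :: "('w, 'p) kmodel" and S
  assume "S \<noteq> {} \<and> (\<forall>s\<in>S. supports M s \<phi>)"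
  then show "supports M (\<Union>S) \<phi>"
    using sem_UNION_if_GDisj_free[OF assms, of S M True id] by simp
qed

lemma flat_if_downward_closed_union_closed_empty_state:
  fixes \<phi> :: "'p form"
  assumes "downward_closed \<phi> TYPE('w)" and "union_closed \<phi> TYPE('w)"
    and "empty_state_property \<phi> TYPE('w)"
  shows "flat \<phi> TYPE('w)"
  unfolding flat_def
proof (intro allI iffI)
  fix M :: "('w, 'p) kmodel" and s
  show "\<forall>w\<in>s. supports M {w} \<phi>" if "supports M s \<phi>"
    using assms(1) that unfolding downward_closed_def by blast
  show "supports M s \<phi>" if singletons: "\<forall>w\<in>s. supports M {w} \<phi>"
  proof (cases "s = {}")
    case True
    with assms(3) show ?thesis unfolding empty_state_property_def by simp
  next
    case False
    then have "supports M (\<Union>w\<in>s. {w}) \<phi>"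
      using union_closedD[OF assms(2), of "(\<lambda>w. {w}) ` s" M] singletons by simp
    then show ?thesis by simp
  qed
qed

theorem fact2p7:
  fixes \<phi> :: "'p form"
  shows "(\<not> has_NE \<phi> \<longrightarrow>
            downward_closed \<phi> TYPE('w) \<and> empty_state_property \<phi> TYPE('w))
       \<and> (\<not> has_GDisj \<phi> \<longrightarrow> union_closed \<phi> TYPE('w))
       \<and> (is_BSML \<phi> \<longrightarrow> union_closed \<phi> TYPE('w))
       \<and> (is_BSML_emp \<phi> \<longrightarrow> union_closed \<phi> TYPE('w))
       \<and> (is_ML \<phi> \<longrightarrow> flat \<phi> TYPE('w))"
  using downward_closed_if_NE_free empty_state_property_if_NE_free
    union_closed_if_GDisj_free flat_if_downward_closed_union_closed_empty_state
  unfolding is_ML_def is_BSML_def is_BSML_emp_def by blast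

end
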